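(* Let $\mathcal S$ be a signed group and let $\mathbf e=(e_1,e_2,\dots)$ be a basic sequence in $\mathcal S$ (finite or countably infinite). Let $C=[c_{jk}]$ with $c_{jk}=c(e_j,e_k)$ be its AC-matrix (so $c_{jj}=1$) and let $D=[d_{jk}]$, $d_{jk}=(1-c_{jk})/2\in\{0,1\}$. Then for all finitary $0$-$1$ sequences $\mathbf p,\mathbf q$, \[ \mathbf e^{\mathbf p}\,\mathbf e^{\mathbf q}=(-1)^{\sum_{j\ge1}\sum_{k>j} d_{jk}\,p_k\,q_j}\;\mathbf e^{\mathbf p+\mathbf q}, \qquad \mathbf e^{\mathbf p+\mathbf q}:=\prod_{n} e_n^{p_n+q_n}\ \text{(ordered by increasing $n$)} . \] Moreover, writing $\langle\mathbf p\rangle=\sum_n p_n$ and $\mathbf p\mathbf q=(p_nq_n)$: (1) $\mathbf e^{\mathbf p}\circ\mathbf e^{\mathbf q}=(-1)^{(\langle C\mathbf p,\mathbf q\rangle-\langle\mathbf p\rangle\langle\mathbf q\rangle)/2}$; (2) if $\mathbf e$ is anticommutative, $\mathbf e^{\mathbf p}\circ\mathbf e^{\mathbf q}=(-1)^{\langle\mathbf p\rangle\langle\mathbf q\rangle-\langle\mathbf p\mathbf q\rangle}$; (3) if $\mathcal G\subset\mathcal S$ is a subgroup generated by a basic sequence of length at least $2$ such that any two elements of $\mathcal G\setminus\{\pm1\}$ that are not equal up to sign anticommute, then the generating sequence has length exactly $2$, i.e. $\mathcal G$ has order $8$; (4) if $\mathbf e$ is anticommutative and $p=\langle\mathbf p\rangle$,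 then the signature of $\mathbf e^{\mathbf p}$ is $(\mathbf e^{\mathbf p})^2=\big(\prod_n e_n^{2p_n}\big)(-1)^{p(p-1)/2}$; in particular, if $\mathbf e$ is positive then $\mathbf e^{\mathbf p}$ is negative iff $p\equiv 2$ or $p\equiv 3 \pmod 4$, and if $\mathbf e$ is negative then $\mathbf e^{\mathbf p}$ is negative iff $p\equiv 2$ or $p\equiv1\pmod 4$; (5) for an anticommutative $\mathbf e$ of length $n$, let $s_+$ (resp. $s_-$) denote the number of negative elements among $\{\mathbf e^{\mathbf p}:\mathbf p\in\{0,1\}^n\}$ when $\mathbf e$ is positive (resp. negative). Then $s_+=b_2+b_3$ and $s_-=b_1+b_2$, where $b_q=\sum_{j\ge0,\ q+4j\le n}\binom{n}{q+4j}$.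
   Context: A signed group is a group $\mathcal S$ containing a central element $-1\neq1$ with $(-1)^2=1$ such that any two elements $e,f$ either commute ($ef=fe$) or anticommute ($ef=-fe$), and every element $e$ has signature $e^2\in\{1,-1\}$; $e$ is positive if $e^2=1$ and negative if $e^2=-1$, and a sequence is positive/negative (pure) if all its elements are. The commutativity function is $c(e,f)=e\circ f=1$ if $ef=fe$ and $-1$ if $ef=-fe$. For a sequence $\mathbf e=(e_n)$ and a finitary $0$-$1$ sequence $\mathbf p$ (i.e. $p_n\in\{0,1\}$, $p_n=0$ eventually), $\mathbf e^{\mathbf p}=e_1^{p_1}e_2^{p_2}\cdots$ with $e^0=1$, $e^1=e$. A sequence is basic if no $\mathbf e^{\mathbf p}$ with $\mathbf p\neq\mathbf 0$ equals $\pm1$. A sequence is anticommutative if any two distinct terms anticommute. *)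

theory Defs
  imports "HOL-Algebra.Algebra"
begin

text \<open>A signed group: a group G with a distinguished central element m (playing the role
of -1), m \<noteq> 1, m^2 = 1, any two elements commute or anticommute, and every element
squares to 1 or m.\<close>
definition signed_group :: "('a, 'b) monoid_scheme \<Rightarrow> 'a \<Rightarrow> bool" where
  "signed_group G m \<longleftrightarrow> group G \<and> m \<in> carrier G \<and> m \<noteq> \<one>\<^bsub>G\<^esub> \<and> m \<otimes>\<^bsub>G\<^esub> m = \<one>\<^bsub>G\<^esub>
     \<and> (\<forall>x\<in>carrier G. m \<otimes>\<^bsub>G\<^esub> x = x \<otimes>\<^bsub>G\<^esub> m)
     \<and> (\<forall>x\<in>carrier G. \<forall>y\<in>carrier G. x \<otimes>\<^bsub>G\<^esub> y = y \<otimes>\<^bsub>G\<^esub> x \<or> x \<otimes>\<^bsub>G\<^esub> y = m \<otimes>\<^bsub>G\<^esub> (y \<otimes>\<^bsub>G\<^esub> x))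
     \<and> (\<forall>x\<in>carrier G. x \<otimes>\<^bsub>G\<^esub> x = \<one>\<^bsub>G\<^esub> \<or> x \<otimes>\<^bsub>G\<^esub> x = m)"

definition comm_fun :: "('a, 'b) monoid_scheme \<Rightarrow> 'a \<Rightarrow> 'a \<Rightarrow> int" where
  "comm_fun G x y = (if x \<otimes>\<^bsub>G\<^esub> y = y \<otimes>\<^bsub>G\<^esub> x then 1 else -1)"

definition neg1pow :: "int \<Rightarrow> int" where
  "neg1pow k = (if even k then 1 else -1)"

text \<open>Index set of a sequence: finite {0..<L} or all of nat (0-based indexing).\<close>
definition seq_index :: "nat set \<Rightarrow> bool" where
  "seq_index I \<longleftrightarrow> I = UNIV \<or> (\<exists>L. I = {..<L})"

definition finitary01 :: "nat set \<Rightarrow> (nat \<Rightarrow> nat) \<Rightarrow> bool" where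
  "finitary01 I p \<longleftrightarrow> (\<forall>n. p n \<in> {0, 1}) \<and> finite {n. p n \<noteq> 0} \<and> (\<forall>n. n \<notin> I \<longrightarrow> p n = 0)"

primrec ordprod :: "('a, 'b) monoid_scheme \<Rightarrow> (nat \<Rightarrow> 'a) \<Rightarrow> nat \<Rightarrow> 'a" where
  "ordprod G f 0 = \<one>\<^bsub>G\<^esub>"
| "ordprod G f (Suc N) = ordprod G f N \<otimes>\<^bsub>G\<^esub> f N"

definition seq_pow :: "('a, 'b) monoid_scheme \<Rightarrow> (nat \<Rightarrow> 'a) \<Rightarrow> (nat \<Rightarrow> nat) \<Rightarrow> 'a" where
  "seq_pow G e p = ordprod G (\<lambda>n. e n [^]\<^bsub>G\<^esub> p n) (LEAST N. \<forall>n\<ge>N. p n = 0)"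

definition basic_seq :: "('a, 'b) monoid_scheme \<Rightarrow> 'a \<Rightarrow> (nat \<Rightarrow> 'a) \<Rightarrow> nat set \<Rightarrow> bool" where
  "basic_seq G m e I \<longleftrightarrow> (\<forall>p. finitary01 I p \<and> p \<noteq> (\<lambda>_. 0) \<longrightarrow>
      seq_pow G e p \<noteq> \<one>\<^bsub>G\<^esub> \<and> seq_pow G e p \<noteq> m)"

definition anticomm_seq :: "('a, 'b) monoid_scheme \<Rightarrow> 'a \<Rightarrow> (nat \<Rightarrow> 'a) \<Rightarrow> nat set \<Rightarrow> bool" where
  "anticomm_seq G m e I \<longleftrightarrow> (\<forall>j\<in>I. \<forall>k\<in>I. j \<noteq> k \<longrightarrow> e j \<otimes>\<^bsub>G\<^esub> e k = m \<otimes>\<^bsub>G\<^esub> (e k \<otimes>\<^bsub>G\<^esub> e j))"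

definition positive_seq :: "('a, 'b) monoid_scheme \<Rightarrow> (nat \<Rightarrow> 'a) \<Rightarrow> nat set \<Rightarrow> bool" where
  "positive_seq G e I \<longleftrightarrow> (\<forall>n\<in>I. e n \<otimes>\<^bsub>G\<^esub> e n = \<one>\<^bsub>G\<^esub>)"

definition negative_seq :: "('a, 'b) monoid_scheme \<Rightarrow> 'a \<Rightarrow> (nat \<Rightarrow> 'a) \<Rightarrow> nat set \<Rightarrow> bool" where
  "negative_seq G m e I \<longleftrightarrow> (\<forall>n\<in>I. e n \<otimes>\<^bsub>G\<^esub> e n = m)"

definition bsum :: "nat \<Rightarrow> nat \<Rightarrow> nat" where
  "bsum n q = (\<Sum>j\<in>{j. q + 4 * j \<le> n}. n choose (q + 4 * j))"

end

(* Sorting the factors of e^p e^q into increasing order moves each factor e_j of e^q past the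
   factors e_k (k > j) of e^p, and each such move contributes the sign c(e_j, e_k); since every
   e_n squares to 1 or -1, the result is a sign times e^(p+q). Comparing e^p e^q with e^q e^p gives
   the commutation rules (1) and (2), and q = p gives (4): for an anticommutative sequence the
   sign exponent counts the P(P-1)/2 pairs in the support of p. The elements +-e^p are pairwise
   distinct for a basic sequence, so (5) reduces to counting subsets by their size mod 4, and a
   basic sequence of length n whose generated group contains -1 generates a group of order
   2^(n+1). In (3) a third generator is impossible: e_0 e_1 commutes with e_2 when all three
   anticommute pairwise, but the hypothesis forces e_0 e_1 and e_2 to anticommute. *)
theory Submission
  imports Defs "HOL-Library.Indicator_Function"
begin

section \<open>Subsets counted by size modulo 4\<close>

lemma card_subsets_card_mod4:
  assumes "q < 4"
  shows "card {A. A \<subseteq> {..<n} \<and> card A mod 4 = q} = bsum n q"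
proof -
  have "{A. A \<subseteq> {..<n} \<and> card A mod 4 = q}
      = (\<Union>j\<in>{j. q + 4 * j \<le> n}. {A. A \<subseteq> {..<n} \<and> card A = q + 4 * j})"
  proof (intro equalityI subsetI)
    fix A assume A: "A \<in> {A. A \<subseteq> {..<n} \<and> card A mod 4 = q}"
    then have "card A \<le> n" using card_mono[of "{..<n}" A] by auto
    with A show "A \<in> (\<Union>j\<in>{j. q + 4 * j \<le> n}. {A. A \<subseteq> {..<n} \<and> card A = q + 4 * j})"
      by (intro UN_I[of "card A div 4"]) auto
  qed (use assms in auto)
  also have "card \<dots> = (\<Sum>j\<in>{j. q + 4 * j \<le> n}. card {A. A \<subseteq> {..<n} \<and> card A = q + 4 * j})"
    by (rule card_UN_disjoint) (auto intro: finite_subset[of _ "{..n}"])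
  finally show ?thesis
    unfolding bsum_def by (simp add: n_subsets)
qed

lemma card_subsets_card_mod4_two:
  assumes "q1 < 4" "q2 < 4" "q1 \<noteq> q2"
  shows "card {A. A \<subseteq> {..<n} \<and> (card A mod 4 = q1 \<or> card A mod 4 = q2)} = bsum n q1 + bsum n q2"
proof -
  have "{A. A \<subseteq> {..<n} \<and> (card A mod 4 = q1 \<or> card A mod 4 = q2)}
     = {A. A \<subseteq> {..<n} \<and> card A mod 4 = q1} \<union> {A. A \<subseteq> {..<n} \<and> card A mod 4 = q2}" by auto
  moreover have "finite {A. A \<subseteq> {..<n} \<and> card A mod 4 = q}" for q
    by (rule finite_subset[of _ "Pow {..<n}"]) auto
  ultimately show ?thesis
    using card_subsets_card_mod4[OF assms(1)] card_subsets_card_mod4[OF assms(2)] assms(3)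
    by (simp add: card_Un_disjoint disjoint_iff)
qed

lemma finitary01_values: "finitary01 I p \<Longrightarrow> p n = 0 \<or> p n = 1"
  unfolding finitary01_def by auto

lemma finitary01_support: "finitary01 I p \<Longrightarrow> p n \<noteq> 0 \<Longrightarrow> n \<in> I"
  unfolding finitary01_def by auto

lemma finitary01_indicator: "finite A \<Longrightarrow> A \<subseteq> I \<Longrightarrow> finitary01 I (indicator A)"
  unfolding finitary01_def indicator_def by auto

lemma finitary01_eq_indicator:
  assumes "finitary01 I p"
  shows "p = indicator {n. p n \<noteq> 0}"
  using assms unfolding finitary01_def by (force simp: indicator_def)

lemma finitary01_set_eq: "{p. finitary01 I p} = indicator ` {A. finite A \<and> A \<subseteq> I}"
proof (intro equalityI subsetI)
  fix p assume "p \<in> {p. finitary01 I p}"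
  then have p: "finitary01 I p" by simp
  then have "{n. p n \<noteq> 0} \<in> {A. finite A \<and> A \<subseteq> I}" by (auto simp: finitary01_def)
  then show "p \<in> indicator ` {A. finite A \<and> A \<subseteq> I}"
    using finitary01_eq_indicator[OF p] by blast
next
  fix p :: "nat \<Rightarrow> nat" assume "p \<in> indicator ` {A. finite A \<and> A \<subseteq> I}"
  then show "p \<in> {p. finitary01 I p}" using finitary01_indicator by blast
qed

lemma inj_indicator_nat: "inj (indicator :: 'a set \<Rightarrow> 'a \<Rightarrow> nat)"
proof (rule injI)
  fix A B :: "'a set" assume "indicator A = (indicator B :: 'a \<Rightarrow> nat)"
  then have "indicator A x = (indicator B x :: nat)" for x by simp
  then have "x \<in> A \<longleftrightarrow> x \<in> B" for x by (metis indicator_eq_1_iff)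
  then show "A = B" by blast
qed

lemma finitary01_xor:
  assumes "finitary01 I p" "finitary01 I q"
  shows "finitary01 I (\<lambda>n. if p n = q n then 0 else 1)"
proof -
  have "{n. p n \<noteq> q n} \<subseteq> {n. p n \<noteq> 0} \<union> {n. q n \<noteq> 0}" by auto
  then show ?thesis using assms unfolding finitary01_def by (auto intro: finite_subset)
qed

lemma finitary01_bound:
  assumes "finitary01 I p"
  shows "\<exists>N. \<forall>n\<ge>N. p n = 0"
proof -
  obtain N where "{n. p n \<noteq> 0} \<subseteq> {..<N}"
    using assms finite_nat_bounded unfolding finitary01_def by blast
  then show ?thesis by (auto simp: subset_iff not_less[symmetric])
qed

lemma finitary01_bound2:
  assumes "finitary01 I p" "finitary01 I q"
  obtains N where "\<forall>n\<ge>N. p n = 0 \<and> q n = 0"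
proof -
  obtain N1 N2 where "\<forall>n\<ge>N1. p n = 0" "\<forall>n\<ge>N2. q n = 0"
    using finitary01_bound[OF assms(1)] finitary01_bound[OF assms(2)] by blast
  then show ?thesis using that[of "max N1 N2"] by simp
qed

lemma sum_finitary01_support:
  assumes "finitary01 I p"
  shows "(\<Sum>n\<in>{n. p n \<noteq> 0}. p n) = card {n. p n \<noteq> 0}"
proof -
  have "(\<Sum>n\<in>{n. p n \<noteq> 0}. p n) = (\<Sum>n\<in>{n. p n \<noteq> 0}. 1)"
    by (rule sum.cong) (use finitary01_values[OF assms] in force)+
  then show ?thesis by simp
qed

lemma card_support_eq_sum:
  assumes "finitary01 I p" "\<forall>n\<ge>N. p n = 0"
  shows "card {n. p n \<noteq> 0} = (\<Sum>n<N. p n)"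
proof -
  have "(\<Sum>n<N. p n) = (\<Sum>n\<in>{n. p n \<noteq> 0}. p n)"
    by (rule sum.mono_neutral_right) (use assms(2) not_less in auto)
  then show ?thesis using sum_finitary01_support[OF assms(1)] by simp
qed

section \<open>Triangular double sums\<close>

lemma sum_upper_triangle_Suc:
  "(\<Sum>j<Suc N. \<Sum>k\<in>{j<..<Suc N}. t j k) = (\<Sum>j<N. \<Sum>k\<in>{j<..<N}. t j k) + (\<Sum>j<N. t j N)"
proof -
  have "(\<Sum>k\<in>{j<..<Suc N}. t j k) = (\<Sum>k\<in>{j<..<N}. t j k) + t j N" if "j < N" for j
  proof -
    have "{j<..<Suc N} = insert N {j<..<N}" using that by auto
    then show ?thesis by (simp add: add.commute)
  qed
  moreover have "{N<..<Suc N} = {}" by auto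
  ultimately show ?thesis by (simp add: sum.distrib)
qed

lemma sum_square_Suc:
  "(\<Sum>j<Suc N. \<Sum>k<Suc N. t j k) = (\<Sum>j<N. \<Sum>k<N. t j k) + (\<Sum>j<N. t j N) + (\<Sum>k<N. t N k) + t N N"
  by (simp add: sum.distrib ac_simps)

lemma sum_upper_triangle_symmetric:
  fixes d :: "nat \<Rightarrow> nat \<Rightarrow> int"
  assumes "\<And>j k. d j k = d k j" "\<And>j. d j j = 0"
  shows "(\<Sum>j<N. \<Sum>k\<in>{j<..<N}. d j k * a k * b j) + (\<Sum>j<N. \<Sum>k\<in>{j<..<N}. d j k * b k * a j)
    = (\<Sum>j<N. \<Sum>k<N. d j k * a k * b j)"
proof (induction N)
  case (Suc N)
  have "(\<Sum>k<N. d N k * a k * b N) = (\<Sum>j<N. d j N * b N * a j)"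
    using assms(1) by (simp add: mult.commute mult.left_commute)
  then show ?case using Suc assms(2) by (simp only: sum_upper_triangle_Suc sum_square_Suc)
qed simp

lemma sum_upper_triangle_01:
  fixes a :: "nat \<Rightarrow> nat"
  assumes "\<And>n. a n \<le> 1"
  shows "(\<Sum>j<N. \<Sum>k\<in>{j<..<N}. a k * a j) = (\<Sum>i<(\<Sum>n<N. a n). i)"
proof (induction N)
  case (Suc N)
  have "a N = 0 \<or> a N = 1" using assms[of N] by auto
  then show ?case
    using Suc by (simp only: sum_upper_triangle_Suc) (auto simp: sum_distrib_right[symmetric])
qed simp

lemma odd_sum_lessThan_iff: "odd (\<Sum>i<(P::nat). i) \<longleftrightarrow> P mod 4 = 2 \<or> P mod 4 = 3"
  by (induction P) (simp_all, presburger)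

lemma odd_pairs_iff: "odd ((P::nat) * (P - 1) div 2) \<longleftrightarrow> P mod 4 = 2 \<or> P mod 4 = 3"
  using odd_sum_lessThan_iff[of P] Sum_Ico_nat[of 0 P] by (simp add: lessThan_atLeast0)

lemma odd_add_pairs_iff: "odd ((P::nat) + P * (P - 1) div 2) \<longleftrightarrow> P mod 4 = 2 \<or> P mod 4 = 1"
  using odd_pairs_iff[of P] by presburger

context monoid
begin

lemma ordprod_closed: "(\<And>n. n < N \<Longrightarrow> f n \<in> carrier G) \<Longrightarrow> ordprod G f N \<in> carrier G"
  by (induction N) auto

lemma ordprod_cong: "(\<And>n. n < N \<Longrightarrow> f n = g n) \<Longrightarrow> ordprod G f N = ordprod G g N"
  by (induction N) auto

lemma ordprod_eq_one: "(\<And>n. n < N \<Longrightarrow> f n = \<one>) \<Longrightarrow> ordprod G f N = \<one>"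
  by (induction N) auto

lemma ordprod_one_tail:
  assumes "\<And>n. f n \<in> carrier G" "\<And>n. n \<ge> N \<Longrightarrow> f n = \<one>" "N \<le> N'"
  shows "ordprod G f N' = ordprod G f N"
  using assms(3)
proof (induction N' rule: dec_induct)
  case (step N')
  then show ?case using assms(1,2) ordprod_closed[of N f] by simp
qed simp

lemma seq_pow_eq_ordprod:
  assumes "\<And>n. e n [^] p n \<in> carrier G" "\<forall>n\<ge>N. p n = 0"
  shows "seq_pow G e p = ordprod G (\<lambda>n. e n [^] p n) N"
proof -
  define N0 where "N0 = (LEAST N. \<forall>n\<ge>N. p n = 0)"
  have "\<forall>n\<ge>N0. p n = 0"
    unfolding N0_def by (rule LeastI_ex) (use assms(2) in blast)
  moreover have "N0 \<le> N"
    unfolding N0_def by (rule Least_le) (rule assms(2))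
  ultimately show ?thesis
    unfolding seq_pow_def N0_def[symmetric] using assms(1) by (intro ordprod_one_tail[symmetric]) auto
qed

lemma nat_pow_closed_if: "(k \<noteq> 0 \<Longrightarrow> x \<in> carrier G) \<Longrightarrow> x [^] (k::nat) \<in> carrier G"
  by (cases "k = 0") auto

end

section \<open>Signed groups\<close>

lemma comm_fun_sym: "comm_fun G x y = comm_fun G y x"
  unfolding comm_fun_def by auto

locale signed_grp = group G for G :: "('a, 'b) monoid_scheme" (structure) +
  fixes m :: 'a
  assumes neg_one_closed [simp]: "m \<in> carrier G"
    and neg_one_neq_one: "m \<noteq> \<one>"
    and neg_one_square: "m \<otimes> m = \<one>"
    and neg_one_central: "x \<in> carrier G \<Longrightarrow> m \<otimes> x = x \<otimes> m"
    and commute_or_anticommute: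
      "x \<in> carrier G \<Longrightarrow> y \<in> carrier G \<Longrightarrow> x \<otimes> y = y \<otimes> x \<or> x \<otimes> y = m \<otimes> (y \<otimes> x)"
    and square_one_or_neg_one: "x \<in> carrier G \<Longrightarrow> x \<otimes> x = \<one> \<or> x \<otimes> x = m"

lemma signed_grpI: "signed_group G m \<Longrightarrow> signed_grp G m"
  unfolding signed_group_def signed_grp_def signed_grp_axioms_def by blast

context signed_grp
begin

definition sign :: "int \<Rightarrow> 'a" where
  "sign k = (if even k then \<one> else m)"

lemma sign_closed [simp]: "sign k \<in> carrier G"
  by (simp add: sign_def)

lemma sign_0 [simp]: "sign 0 = \<one>" and sign_1: "sign 1 = m"
  by (simp_all add: sign_def)

lemma sign_add: "sign (a + b) = sign a \<otimes> sign b"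
  by (auto simp: sign_def neg_one_square)

lemma sign_square: "sign k \<otimes> sign k = \<one>"
  by (auto simp: sign_def neg_one_square)

lemma sign_eq_one_iff: "sign k = \<one> \<longleftrightarrow> even k"
  and sign_eq_neg_one_iff: "sign k = m \<longleftrightarrow> odd k"
  using neg_one_neq_one by (auto simp: sign_def)

lemma sign_eq_iff: "sign a = sign b \<longleftrightarrow> even a = even b"
  using neg_one_neq_one by (auto simp: sign_def)

lemma sign_central: "x \<in> carrier G \<Longrightarrow> sign k \<otimes> x = x \<otimes> sign k"
  by (auto simp: sign_def neg_one_central)

lemma sign_left_commute: "x \<in> carrier G \<Longrightarrow> y \<in> carrier G \<Longrightarrow> x \<otimes> (sign k \<otimes> y) = sign k \<otimes> (x \<otimes> y)"
  by (metis m_assoc sign_central sign_closed)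

lemma sign_mult_eq_iff: "x \<in> carrier G \<Longrightarrow> y \<in> carrier G \<Longrightarrow> sign k \<otimes> x = y \<longleftrightarrow> x = sign k \<otimes> y"
  by (metis l_one m_assoc sign_closed sign_square)

lemma nat_pow_neg_one: "m [^] (k::nat) = sign (int k)"
  by (induction k) (auto simp: sign_def neg_one_square)

lemma int_pow_neg_one: "m [^] (k::int) = sign k"
proof (cases "k < 0")
  case True
  then have "m [^] k = inv (sign (- k))" by (simp add: int_pow_def2 nat_pow_neg_one)
  also have "\<dots> = sign k" using sign_square by (simp add: inv_char sign_def)
  finally show ?thesis .
qed (simp add: int_pow_def2 nat_pow_neg_one)

lemma square_eq_sign: "x \<in> carrier G \<Longrightarrow> \<exists>a. x \<otimes> x = sign a"
  using square_one_or_neg_one by (metis sign_0 sign_1)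

lemma commute_sign:
  "x \<in> carrier G \<Longrightarrow> y \<in> carrier G \<Longrightarrow> x \<otimes> y = sign ((1 - comm_fun G x y) div 2) \<otimes> (y \<otimes> x)"
  using commute_or_anticommute[of x y] by (auto simp: comm_fun_def sign_def)

lemma comm_fun_eq_neg1pow:
  assumes "x \<in> carrier G" "y \<in> carrier G" "x \<otimes> y = sign t \<otimes> (y \<otimes> x)"
  shows "comm_fun G x y = neg1pow t"
  using assms sign_eq_one_iff[of t]
  by (auto simp: comm_fun_def neg1pow_def r_cancel_one')

lemma comm_fun_anticommute:
  "x \<in> carrier G \<Longrightarrow> y \<in> carrier G \<Longrightarrow> x \<otimes> y = m \<otimes> (y \<otimes> x) \<Longrightarrow> comm_fun G x y = -1"
  using comm_fun_eq_neg1pow[of x y 1] by (simp add: sign_1 neg1pow_def)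

lemma prod_not_sign_imp_distinct:
  assumes "x \<in> carrier G" "y \<in> carrier G" "x \<otimes> y \<noteq> \<one>" "x \<otimes> y \<noteq> m"
  shows "x \<noteq> y \<and> x \<noteq> m \<otimes> y"
proof
  show "x \<noteq> y" using assms square_one_or_neg_one[of x] by auto
  show "x \<noteq> m \<otimes> y"
  proof
    assume "x = m \<otimes> y"
    then have "x \<otimes> y = m \<otimes> (y \<otimes> y)" using assms by (simp add: m_assoc)
    then show False using assms square_one_or_neg_one[of y] neg_one_square by auto
  qed
qed

lemma anticommuting_triple:
  assumes x: "x \<in> carrier G" and y: "y \<in> carrier G" and z: "z \<in> carrier G"
    and xz: "x \<otimes> z = m \<otimes> (z \<otimes> x)" and yz: "y \<otimes> z = m \<otimes> (z \<otimes> y)"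
  shows "x \<otimes> y \<otimes> z = z \<otimes> (x \<otimes> y)"
proof -
  have "x \<otimes> y \<otimes> z = x \<otimes> (m \<otimes> (z \<otimes> y))" using x y z by (simp add: m_assoc yz)
  also have "\<dots> = m \<otimes> ((x \<otimes> z) \<otimes> y)"
    using x y z sign_left_commute[of x "z \<otimes> y" 1] by (simp add: sign_1 m_assoc)
  also have "\<dots> = (m \<otimes> m) \<otimes> (z \<otimes> (x \<otimes> y))" using x y z by (simp add: xz m_assoc)
  finally show ?thesis using x y z by (simp add: neg_one_square)
qed

lemma commute_past_ordprod:
  assumes "x \<in> carrier G" "\<And>n. n < N \<Longrightarrow> f n \<in> carrier G"
    and "\<And>n. n < N \<Longrightarrow> x \<otimes> f n = sign (t n) \<otimes> (f n \<otimes> x)"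
  shows "x \<otimes> ordprod G f N = sign (\<Sum>n<N. t n) \<otimes> (ordprod G f N \<otimes> x)"
  using assms(2,3)
proof (induction N)
  case (Suc N)
  have F: "ordprod G f N \<in> carrier G" and fN: "f N \<in> carrier G"
    using Suc.prems(1) by (auto intro: ordprod_closed)
  have "x \<otimes> ordprod G f (Suc N) = (x \<otimes> ordprod G f N) \<otimes> f N"
    using F fN assms(1) by (simp add: m_assoc)
  also have "\<dots> = sign (\<Sum>n<N. t n) \<otimes> (ordprod G f N \<otimes> (x \<otimes> f N))"
    using Suc F fN assms(1) by (simp add: m_assoc)
  also have "\<dots> = sign (\<Sum>n<Suc N. t n) \<otimes> (ordprod G f (Suc N) \<otimes> x)"
    using Suc.prems(2)[of N] F fN assms(1)
    by (simp add: sign_add m_assoc sign_left_commute[of "ordprod G f N"])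
  finally show ?case .
qed (use assms(1) in simp)

lemma ordprod_sign_factor:
  assumes "\<And>n. n < N \<Longrightarrow> g n \<in> carrier G" "\<And>n. n < N \<Longrightarrow> f n = sign (a n) \<otimes> g n"
  shows "ordprod G f N = sign (\<Sum>n<N. a n) \<otimes> ordprod G g N"
  using assms
proof (induction N)
  case (Suc N)
  have "ordprod G g N \<in> carrier G" "g N \<in> carrier G"
    using Suc.prems(1) by (auto intro: ordprod_closed)
  then show ?case
    using Suc by (simp add: sign_add m_assoc sign_left_commute[of "ordprod G g N"])
qed simp

text \<open>Each factor g j has to move past the factors f k with k > j, whence the triangular sum.\<close>
lemma ordprod_mult_ordprod:
  assumes "\<And>n. n < N \<Longrightarrow> f n \<in> carrier G" "\<And>n. n < N \<Longrightarrow> g n \<in> carrier G"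
    and "\<And>j k. j < k \<Longrightarrow> k < N \<Longrightarrow> f k \<otimes> g j = sign (t j k) \<otimes> (g j \<otimes> f k)"
  shows "ordprod G f N \<otimes> ordprod G g N
     = sign (\<Sum>j<N. \<Sum>k\<in>{j<..<N}. t j k) \<otimes> ordprod G (\<lambda>n. f n \<otimes> g n) N"
  using assms
proof (induction N)
  case (Suc N)
  have F: "ordprod G f N \<in> carrier G" and Gg: "ordprod G g N \<in> carrier G"
    and H: "ordprod G (\<lambda>n. f n \<otimes> g n) N \<in> carrier G"
    and fN: "f N \<in> carrier G" and gN: "g N \<in> carrier G"
    using Suc.prems(1,2) by (auto intro: ordprod_closed)
  have IH: "ordprod G f N \<otimes> ordprod G g N
     = sign (\<Sum>j<N. \<Sum>k\<in>{j<..<N}. t j k) \<otimes> ordprod G (\<lambda>n. f n \<otimes> g n) N"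
    using Suc by auto
  have past: "f N \<otimes> ordprod G g N = sign (\<Sum>j<N. t j N) \<otimes> (ordprod G g N \<otimes> f N)"
    by (rule commute_past_ordprod) (use fN Suc.prems(2,3) in auto)
  have "ordprod G f (Suc N) \<otimes> ordprod G g (Suc N) = ordprod G f N \<otimes> (f N \<otimes> ordprod G g N) \<otimes> g N"
    using F Gg fN gN by (simp add: m_assoc)
  also have "\<dots> = sign (\<Sum>j<N. t j N) \<otimes> (ordprod G f N \<otimes> ordprod G g N) \<otimes> (f N \<otimes> g N)"
    using F Gg fN gN by (simp add: past m_assoc sign_left_commute[of "ordprod G f N"])
  also have "\<dots> = sign (\<Sum>j<N. t j N) \<otimes> sign (\<Sum>j<N. \<Sum>k\<in>{j<..<N}. t j k)
      \<otimes> (ordprod G (\<lambda>n. f n \<otimes> g n) N \<otimes> (f N \<otimes> g N))"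
    using H fN gN by (simp add: IH m_assoc)
  also have "\<dots> = sign (\<Sum>j<Suc N. \<Sum>k\<in>{j<..<Suc N}. t j k) \<otimes> ordprod G (\<lambda>n. f n \<otimes> g n) (Suc N)"
    by (simp only: sum_upper_triangle_Suc sign_add add.commute ordprod.simps)
  finally show ?case .
qed simp

end

section \<open>Products along a sequence\<close>

locale signed_seq = signed_grp +
  fixes e :: "nat \<Rightarrow> 'a" and I :: "nat set"
  assumes seq_closed: "e ` I \<subseteq> carrier G"

lemma signed_seqI: "signed_grp G m \<Longrightarrow> e ` I \<subseteq> carrier G \<Longrightarrow> signed_seq G m e I"
  by (simp add: signed_seq_def signed_seq_axioms_def)

context signed_seq
begin

lemma seq_closed_at [simp]: "n \<in> I \<Longrightarrow> e n \<in> carrier G"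
  using seq_closed by blast

abbreviation anti_ind :: "nat \<Rightarrow> nat \<Rightarrow> int" where
  "anti_ind j k \<equiv> (1 - comm_fun G (e j) (e k)) div 2"

lemma anti_ind_sym: "anti_ind j k = anti_ind k j"
  by (simp add: comm_fun_sym)

lemma anti_ind_diag: "anti_ind j j = 0"
  by (simp add: comm_fun_def)

lemma anti_ind_anticomm:
  assumes "anticomm_seq G m e I" "j \<in> I" "k \<in> I" "j \<noteq> k"
  shows "anti_ind j k = 1"
proof -
  have "e j \<otimes> e k = m \<otimes> (e k \<otimes> e j)"
    using assms unfolding anticomm_seq_def by blast
  then show ?thesis
    using assms(2,3) comm_fun_anticommute[of "e j" "e k"] by simp
qed

lemma support_closed: "finitary01 I p \<Longrightarrow> p n \<noteq> 0 \<Longrightarrow> e n \<in> carrier G"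
  using seq_closed finitary01_support by blast

lemma finitary01_pow_closed: "finitary01 I p \<Longrightarrow> e n [^] p n \<in> carrier G"
  by (rule nat_pow_closed_if) (rule support_closed)

lemma seq_pow_closed_if:
  assumes "\<And>n. p n \<noteq> 0 \<Longrightarrow> n \<in> I" "\<forall>n\<ge>N. p n = 0"
  shows "seq_pow G e p \<in> carrier G"
proof -
  have "e n [^] p n \<in> carrier G" for n
    using assms(1) seq_closed by (intro nat_pow_closed_if) auto
  then show ?thesis using assms(2) by (simp add: seq_pow_eq_ordprod ordprod_closed)
qed

lemma seq_pow_closed: "finitary01 I p \<Longrightarrow> seq_pow G e p \<in> carrier G"
  using finitary01_bound[of I p] finitary01_support[of I p] seq_pow_closed_if by blast

theorem seq_pow_mult:
  assumes p: "finitary01 I p" and q: "finitary01 I q" and N: "\<forall>n\<ge>N. p n = 0 \<and> q n = 0"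
  shows "seq_pow G e p \<otimes> seq_pow G e q =
     sign (\<Sum>j<N. \<Sum>k\<in>{j<..<N}. anti_ind j k * int (p k) * int (q j)) \<otimes> seq_pow G e (\<lambda>n. p n + q n)"
proof -
  have cpq: "e n [^] (p n + q n) \<in> carrier G" for n
    by (rule nat_pow_closed_if) (use support_closed[OF p] support_closed[OF q] in auto)
  have mult: "e n [^] p n \<otimes> e n [^] q n = e n [^] (p n + q n)" for n
    by (cases "p n = 0"; cases "q n = 0") (auto simp: nat_pow_mult support_closed[OF p] support_closed[OF q])
  have swap: "e k [^] p k \<otimes> e j [^] q j
      = sign (anti_ind j k * int (p k) * int (q j)) \<otimes> (e j [^] q j \<otimes> e k [^] p k)" for j k
  proof (cases "p k = 0 \<or> q j = 0")
    case True
    then show ?thesis using finitary01_pow_closed[OF p] finitary01_pow_closed[OF q] by auto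
  next
    case False
    then have "p k = 1" "q j = 1" "e k \<in> carrier G" "e j \<in> carrier G"
      using finitary01_values[OF p, of k] finitary01_values[OF q, of j]
        support_closed[OF p] support_closed[OF q] by auto
    then show ?thesis using commute_sign[of "e k" "e j"] by (simp add: comm_fun_sym)
  qed
  have "seq_pow G e p \<otimes> seq_pow G e q = ordprod G (\<lambda>n. e n [^] p n) N \<otimes> ordprod G (\<lambda>n. e n [^] q n) N"
    using N seq_pow_eq_ordprod[OF finitary01_pow_closed[OF p], of N]
      seq_pow_eq_ordprod[OF finitary01_pow_closed[OF q], of N] by simp
  also have "\<dots> = sign (\<Sum>j<N. \<Sum>k\<in>{j<..<N}. anti_ind j k * int (p k) * int (q j))
      \<otimes> ordprod G (\<lambda>n. e n [^] p n \<otimes> e n [^] q n) N"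
    by (rule ordprod_mult_ordprod[where t = "\<lambda>j k. anti_ind j k * int (p k) * int (q j)"])
      (simp_all only: finitary01_pow_closed[OF p] finitary01_pow_closed[OF q] swap)
  also have "ordprod G (\<lambda>n. e n [^] p n \<otimes> e n [^] q n) N = seq_pow G e (\<lambda>n. p n + q n)"
    unfolding mult using N by (intro seq_pow_eq_ordprod[symmetric] cpq) simp
  finally show ?thesis .
qed

lemma comm_fun_seq_pow:
  assumes p: "finitary01 I p" and q: "finitary01 I q" and N: "\<forall>n\<ge>N. p n = 0 \<and> q n = 0"
  shows "comm_fun G (seq_pow G e p) (seq_pow G e q)
    = neg1pow (\<Sum>j<N. \<Sum>k<N. anti_ind j k * int (p k) * int (q j))"
proof -
  define S where "S p q = (\<Sum>j<N. \<Sum>k\<in>{j<..<N}. anti_ind j k * int (p k) * int (q j))" for p q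
  have sum: "S p q + S q p = (\<Sum>j<N. \<Sum>k<N. anti_ind j k * int (p k) * int (q j))"
    unfolding S_def by (rule sum_upper_triangle_symmetric[OF anti_ind_sym anti_ind_diag])
  have pq: "seq_pow G e p \<otimes> seq_pow G e q = sign (S p q) \<otimes> seq_pow G e (\<lambda>n. p n + q n)"
    unfolding S_def using p q N by (rule seq_pow_mult)
  have "seq_pow G e q \<otimes> seq_pow G e p = sign (S q p) \<otimes> seq_pow G e (\<lambda>n. p n + q n)"
    unfolding S_def using seq_pow_mult[OF q p] N by (simp add: add.commute)
  moreover have "seq_pow G e (\<lambda>n. p n + q n) \<in> carrier G"
    using N finitary01_support[OF p] finitary01_support[OF q]
    by (intro seq_pow_closed_if[of _ N]) auto
  ultimately have "seq_pow G e (\<lambda>n. p n + q n) = sign (S q p) \<otimes> (seq_pow G e q \<otimes> seq_pow G e p)"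
    using sign_mult_eq_iff[of "seq_pow G e (\<lambda>n. p n + q n)" "seq_pow G e q \<otimes> seq_pow G e p" "S q p"]
      seq_pow_closed[OF p] seq_pow_closed[OF q] by auto
  with pq have "seq_pow G e p \<otimes> seq_pow G e q
      = sign (S p q) \<otimes> (sign (S q p) \<otimes> (seq_pow G e q \<otimes> seq_pow G e p))"
    by simp
  also have "\<dots> = sign (\<Sum>j<N. \<Sum>k<N. anti_ind j k * int (p k) * int (q j)) \<otimes> (seq_pow G e q \<otimes> seq_pow G e p)"
    using seq_pow_closed[OF p] seq_pow_closed[OF q] by (simp add: sum[symmetric] sign_add m_assoc)
  finally show ?thesis
    by (rule comm_fun_eq_neg1pow[OF seq_pow_closed[OF p] seq_pow_closed[OF q]])
qed

lemma comm_fun_seq_pow_ac_matrix: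
  assumes p: "finitary01 I p" and q: "finitary01 I q" and N: "\<forall>n\<ge>N. p n = 0 \<and> q n = 0"
  shows "comm_fun G (seq_pow G e p) (seq_pow G e q)
    = neg1pow (((\<Sum>j<N. \<Sum>k<N. comm_fun G (e j) (e k) * int (p k) * int (q j))
                - (\<Sum>n<N. int (p n)) * (\<Sum>n<N. int (q n))) div 2)"
proof -
  define T where "T = (\<Sum>j<N. \<Sum>k<N. anti_ind j k * int (p k) * int (q j))"
  have "comm_fun G (e j) (e k) * int (p k) * int (q j)
      = int (p k) * int (q j) - 2 * (anti_ind j k * int (p k) * int (q j))" for j k
    by (simp add: comm_fun_def algebra_simps)
  then have "(\<Sum>j<N. \<Sum>k<N. comm_fun G (e j) (e k) * int (p k) * int (q j))
      = (\<Sum>j<N. \<Sum>k<N. int (p k) * int (q j)) - 2 * T"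
    unfolding T_def by (simp add: sum_subtractf sum_distrib_left)
  also have "(\<Sum>j<N. \<Sum>k<N. int (p k) * int (q j)) = (\<Sum>n<N. int (p n)) * (\<Sum>n<N. int (q n))"
    unfolding sum_product by (rule sum.swap)
  finally have "((\<Sum>j<N. \<Sum>k<N. comm_fun G (e j) (e k) * int (p k) * int (q j))
      - (\<Sum>n<N. int (p n)) * (\<Sum>n<N. int (q n))) div 2 = - T" by simp
  then show ?thesis
    using comm_fun_seq_pow[OF p q N] by (simp add: T_def neg1pow_def)
qed

lemma comm_fun_seq_pow_anticomm:
  assumes ac: "anticomm_seq G m e I"
    and p: "finitary01 I p" and q: "finitary01 I q" and N: "\<forall>n\<ge>N. p n = 0 \<and> q n = 0"
  shows "comm_fun G (seq_pow G e p) (seq_pow G e q)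
    = neg1pow ((\<Sum>n<N. int (p n)) * (\<Sum>n<N. int (q n)) - (\<Sum>n<N. int (p n * q n)))"
proof -
  have summand: "anti_ind j k * int (p k) * int (q j)
      = int (p k) * int (q j) - (if j = k then int (p k) * int (q j) else 0)" for j k
  proof (cases "p k = 0 \<or> q j = 0 \<or> j = k")
    case False
    then show ?thesis
      using anti_ind_anticomm[OF ac] finitary01_support[OF p] finitary01_support[OF q] by auto
  qed (auto simp: anti_ind_diag)
  have "(\<Sum>j<N. \<Sum>k<N. anti_ind j k * int (p k) * int (q j))
      = (\<Sum>j<N. \<Sum>k<N. int (p k) * int (q j)) - (\<Sum>n<N. int (p n * q n))"
    unfolding summand by (simp add: sum_subtractf)
  also have "(\<Sum>j<N. \<Sum>k<N. int (p k) * int (q j)) = (\<Sum>n<N. int (p n)) * (\<Sum>n<N. int (q n))"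
    unfolding sum_product by (rule sum.swap)
  finally show ?thesis
    using comm_fun_seq_pow[OF p q N] by simp
qed

lemma seq_pow_square:
  assumes ac: "anticomm_seq G m e I" and p: "finitary01 I p"
  defines "P \<equiv> card {n. p n \<noteq> 0}"
  shows "seq_pow G e p \<otimes> seq_pow G e p = seq_pow G e (\<lambda>n. 2 * p n) \<otimes> sign (int (P * (P - 1) div 2))"
proof -
  obtain N where N: "\<forall>n\<ge>N. p n = 0" using finitary01_bound[OF p] by blast
  have "anti_ind j k * int (p k) * int (p j) = int (p k * p j)" if "j < k" for j k
    using that anti_ind_anticomm[OF ac] finitary01_support[OF p] by (cases "p k = 0 \<or> p j = 0") auto
  then have "(\<Sum>j<N. \<Sum>k\<in>{j<..<N}. anti_ind j k * int (p k) * int (p j))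
      = int (\<Sum>j<N. \<Sum>k\<in>{j<..<N}. p k * p j)"
    unfolding of_nat_sum by (intro sum.cong refl) simp
  also have "\<dots> = int (P * (P - 1) div 2)"
    using sum_upper_triangle_01[of p N] finitary01_values[OF p] Sum_Ico_nat[of 0 P]
      card_support_eq_sum[OF p N]
    by (simp add: P_def lessThan_atLeast0 le_Suc_eq)
  finally have "seq_pow G e p \<otimes> seq_pow G e p = sign (int (P * (P - 1) div 2)) \<otimes> seq_pow G e (\<lambda>n. 2 * p n)"
    using seq_pow_mult[OF p p] N by (simp add: mult_2)
  moreover have "seq_pow G e (\<lambda>n. 2 * p n) \<in> carrier G"
    using N finitary01_support[OF p] by (intro seq_pow_closed_if[of _ N]) auto
  ultimately show ?thesis by (simp add: sign_central)
qed

lemma seq_pow_double: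
  assumes p: "finitary01 I p" and sq: "\<forall>n\<in>I. e n \<otimes> e n = sign s"
  shows "seq_pow G e (\<lambda>n. 2 * p n) = sign (s * int (card {n. p n \<noteq> 0}))"
proof -
  obtain N where N: "\<forall>n\<ge>N. p n = 0" using finitary01_bound[OF p] by blast
  have pow: "e n [^] (2 * p n) = sign (s * int (p n)) \<otimes> \<one>" for n
  proof (cases "p n = 0")
    case False
    then have "p n = 1" "n \<in> I"
      using finitary01_values[OF p, of n] finitary01_support[OF p] by auto
    then show ?thesis using sq by (auto simp: numeral_2_eq_2)
  qed simp
  have "seq_pow G e (\<lambda>n. 2 * p n) = ordprod G (\<lambda>n. e n [^] (2 * p n)) N"
    using N pow by (intro seq_pow_eq_ordprod) auto
  also have "\<dots> = sign (\<Sum>n<N. s * int (p n)) \<otimes> ordprod G (\<lambda>_. \<one>) N"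
    using pow by (intro ordprod_sign_factor) auto
  also have "(\<Sum>n<N. s * int (p n)) = s * int (card {n. p n \<noteq> 0})"
    unfolding card_support_eq_sum[OF p N] by (simp add: sum_distrib_left)
  finally show ?thesis by (simp add: ordprod_eq_one)
qed

lemma seq_pow_square_positive:
  assumes "anticomm_seq G m e I" "positive_seq G e I" "finitary01 I p"
  defines "P \<equiv> card {n. p n \<noteq> 0}"
  shows "seq_pow G e p \<otimes> seq_pow G e p = m \<longleftrightarrow> P mod 4 = 2 \<or> P mod 4 = 3"
proof -
  have "seq_pow G e (\<lambda>n. 2 * p n) = \<one>"
    using seq_pow_double[of p 0] assms(2,3) unfolding positive_seq_def by simp
  then show ?thesis
    using seq_pow_square[OF assms(1,3), folded P_def] odd_pairs_iff[of P]
    by (simp add: sign_eq_neg_one_iff)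
qed

lemma seq_pow_square_negative:
  assumes "anticomm_seq G m e I" "negative_seq G m e I" "finitary01 I p"
  defines "P \<equiv> card {n. p n \<noteq> 0}"
  shows "seq_pow G e p \<otimes> seq_pow G e p = m \<longleftrightarrow> P mod 4 = 2 \<or> P mod 4 = 1"
proof -
  have "seq_pow G e (\<lambda>n. 2 * p n) = sign (int P)"
    using seq_pow_double[of p 1] assms(2,3) unfolding negative_seq_def P_def by (simp add: sign_1)
  then show ?thesis
    using seq_pow_square[OF assms(1,3), folded P_def] odd_add_pairs_iff[of P]
    by (simp add: sign_eq_neg_one_iff flip: sign_add)
qed

lemma seq_pow_add_normal_form:
  assumes p: "finitary01 I p" and q: "finitary01 I q"
  obtains K where "seq_pow G e (\<lambda>n. p n + q n) = sign K \<otimes> seq_pow G e (\<lambda>n. if p n = q n then 0 else 1)"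
proof -
  define r where "r = (\<lambda>n. if p n = q n then 0 else 1::nat)"
  have r: "finitary01 I r" unfolding r_def by (rule finitary01_xor[OF p q])
  obtain N where N: "\<forall>n\<ge>N. p n = 0 \<and> q n = 0" using finitary01_bound2[OF p q] by blast
  define a where "a n = (if e n \<otimes> e n = \<one> then 0 else 1 :: int)" for n
  have a: "e n \<otimes> e n = sign (a n)" if "n \<in> I" for n
    using square_one_or_neg_one[of "e n"] that by (auto simp: a_def sign_1)
  have pow: "e n [^] (p n + q n) = sign (if p n + q n = 2 then a n else 0) \<otimes> e n [^] r n" for n
  proof -
    consider "p n = 0" "q n = 0" | "p n = 1" "q n = 0" | "p n = 0" "q n = 1" | "p n = 1" "q n = 1"
      using finitary01_values[OF p, of n] finitary01_values[OF q, of n] by auto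
    then show ?thesis
    proof cases
      case 4
      then have "n \<in> I" using finitary01_support[OF p] by simp
      then show ?thesis using 4 a by (auto simp: r_def numeral_2_eq_2)
    qed (auto simp: r_def support_closed[OF p] support_closed[OF q])
  qed
  have "seq_pow G e (\<lambda>n. p n + q n) = ordprod G (\<lambda>n. e n [^] (p n + q n)) N"
    using N pow finitary01_pow_closed[OF r] by (intro seq_pow_eq_ordprod) auto
  also have "\<dots> = sign (\<Sum>n<N. if p n + q n = 2 then a n else 0) \<otimes> ordprod G (\<lambda>n. e n [^] r n) N"
    using pow finitary01_pow_closed[OF r] by (intro ordprod_sign_factor) auto
  also have "ordprod G (\<lambda>n. e n [^] r n) N = seq_pow G e r"
    using N finitary01_pow_closed[OF r] by (intro seq_pow_eq_ordprod[symmetric]) (auto simp: r_def)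
  finally show ?thesis using that unfolding r_def by blast
qed

lemma seq_pow_mult_normal_form:
  assumes p: "finitary01 I p" and q: "finitary01 I q"
  obtains K where "seq_pow G e p \<otimes> seq_pow G e q = sign K \<otimes> seq_pow G e (\<lambda>n. if p n = q n then 0 else 1)"
proof -
  obtain N where N: "\<forall>n\<ge>N. p n = 0 \<and> q n = 0" using finitary01_bound2[OF p q] by blast
  obtain S where "seq_pow G e p \<otimes> seq_pow G e q = sign S \<otimes> seq_pow G e (\<lambda>n. p n + q n)"
    using seq_pow_mult[OF p q N] by blast
  moreover obtain K where "seq_pow G e (\<lambda>n. p n + q n) = sign K \<otimes> seq_pow G e (\<lambda>n. if p n = q n then 0 else 1)"
    using seq_pow_add_normal_form[OF p q] by blast
  ultimately have "seq_pow G e p \<otimes> seq_pow G e q = sign (S + K) \<otimes> seq_pow G e (\<lambda>n. if p n = q n then 0 else 1)"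
    using seq_pow_closed[OF finitary01_xor[OF p q]] by (simp add: sign_add m_assoc)
  then show ?thesis by (rule that)
qed

lemma basic_seq_pow_eq_sign:
  assumes "basic_seq G m e I" "finitary01 I r" "seq_pow G e r = sign k"
  shows "r = (\<lambda>_. 0)"
  using assms unfolding basic_seq_def sign_def by (auto split: if_splits)

lemma sign_seq_pow_inj:
  assumes bas: "basic_seq G m e I" and p: "finitary01 I p" and q: "finitary01 I q"
    and eq: "sign a \<otimes> seq_pow G e p = sign b \<otimes> seq_pow G e q"
  shows "p = q \<and> sign a = sign b"
proof -
  define r where "r = (\<lambda>n. if p n = q n then 0 else 1::nat)"
  have r: "finitary01 I r" unfolding r_def by (rule finitary01_xor[OF p q])
  note closed = seq_pow_closed[OF p] seq_pow_closed[OF q] seq_pow_closed[OF r]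
  obtain K where K: "seq_pow G e p \<otimes> seq_pow G e q = sign K \<otimes> seq_pow G e r"
    using seq_pow_mult_normal_form[OF p q] unfolding r_def by blast
  obtain c where c: "seq_pow G e q \<otimes> seq_pow G e q = sign c"
    using square_eq_sign[OF seq_pow_closed[OF q]] by blast
  have "seq_pow G e p = sign (a + b) \<otimes> seq_pow G e q"
    using eq closed sign_mult_eq_iff[of "seq_pow G e p" "sign b \<otimes> seq_pow G e q" a]
    by (simp add: sign_add m_assoc)
  then have "sign K \<otimes> seq_pow G e r = sign (a + b + c)"
    using K closed c by (simp add: m_assoc sign_add)
  then have "seq_pow G e r = sign (K + (a + b + c))"
    using closed sign_mult_eq_iff[of "seq_pow G e r" "sign (a + b + c)" K] by (simp add: sign_add)
  then have "r = (\<lambda>_. 0)" by (rule basic_seq_pow_eq_sign[OF bas r])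
  then have "p = q"
    unfolding r_def fun_eq_iff by (metis one_neq_zero)
  then show ?thesis using eq closed by (simp add: r_cancel)
qed

lemma card_seq_pow_squares:
  assumes bas: "basic_seq G m e I" and I: "I = {..<n}"
    and sq: "\<And>p. finitary01 I p \<Longrightarrow> seq_pow G e p \<otimes> seq_pow G e p = m \<longleftrightarrow> R (card {k. p k \<noteq> 0})"
  shows "card {x. (\<exists>p. finitary01 I p \<and> x = seq_pow G e p) \<and> x \<otimes> x = m}
    = card {A. A \<subseteq> {..<n} \<and> R (card A)}"
proof -
  define \<A> where "\<A> = {A. A \<subseteq> {..<n} \<and> R (card A)}"
  have eq: "{x. (\<exists>p. finitary01 I p \<and> x = seq_pow G e p) \<and> x \<otimes> x = m} = (seq_pow G e \<circ> indicator) ` \<A>"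
  proof (intro equalityI subsetI)
    fix x assume "x \<in> {x. (\<exists>p. finitary01 I p \<and> x = seq_pow G e p) \<and> x \<otimes> x = m}"
    then obtain p where p: "finitary01 I p" "x = seq_pow G e p" "x \<otimes> x = m" by blast
    then have "{k. p k \<noteq> 0} \<in> \<A>"
      using sq[OF p(1)] unfolding \<A>_def I finitary01_def by auto
    moreover have "x = (seq_pow G e \<circ> indicator) {k. p k \<noteq> 0}"
      using p(2) arg_cong[OF finitary01_eq_indicator[OF p(1)], of "seq_pow G e"] by simp
    ultimately show "x \<in> (seq_pow G e \<circ> indicator) ` \<A>" by blast
  next
    fix x assume "x \<in> (seq_pow G e \<circ> indicator) ` \<A>"
    then obtain A where A: "A \<subseteq> {..<n}" "R (card A)" "x = seq_pow G e (indicator A)"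
      unfolding \<A>_def by auto
    then have p: "finitary01 I (indicator A)"
      using I finite_subset by (auto intro: finitary01_indicator)
    have "{k. indicator A k \<noteq> (0::nat)} = A" by (auto simp: indicator_def)
    then show "x \<in> {x. (\<exists>p. finitary01 I p \<and> x = seq_pow G e p) \<and> x \<otimes> x = m}"
      using A p sq[OF p] by auto
  qed
  have inj: "inj_on (seq_pow G e \<circ> indicator) \<A>"
  proof (rule comp_inj_on)
    show "inj_on (indicator :: nat set \<Rightarrow> nat \<Rightarrow> nat) \<A>" by (rule inj_on_subset[OF inj_indicator_nat subset_UNIV])
    show "inj_on (seq_pow G e) (indicator ` \<A>)"
    proof (rule inj_onI)
      fix p q assume "p \<in> indicator ` \<A>" "q \<in> indicator ` \<A>" "seq_pow G e p = seq_pow G e q"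
      moreover have "finitary01 I p" if "p \<in> indicator ` \<A>" for p
        using that I finite_subset by (auto simp: \<A>_def intro: finitary01_indicator)
      ultimately show "p = q" using sign_seq_pow_inj[OF bas, of p q 0 0] by simp
    qed
  qed
  show ?thesis using card_image[OF inj] by (simp only: eq \<A>_def)
qed

lemma card_negative_seq_pows_of_positive:
  assumes "basic_seq G m e I" "I = {..<n}" "anticomm_seq G m e I" "positive_seq G e I"
  shows "card {x. (\<exists>p. finitary01 I p \<and> x = seq_pow G e p) \<and> x \<otimes> x = m} = bsum n 2 + bsum n 3"
  using card_seq_pow_squares[OF assms(1,2) seq_pow_square_positive[OF assms(3,4)]]
    card_subsets_card_mod4_two[of 2 3 n] by simp

lemma card_negative_seq_pows_of_negative:
  assumes "basic_seq G m e I" "I = {..<n}" "anticomm_seq G m e I" "negative_seq G m e I"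
  shows "card {x. (\<exists>p. finitary01 I p \<and> x = seq_pow G e p) \<and> x \<otimes> x = m} = bsum n 1 + bsum n 2"
  using card_seq_pow_squares[OF assms(1,2) seq_pow_square_negative[OF assms(3,4)]]
    card_subsets_card_mod4_two[of 2 1 n] by simp

subsection \<open>The group generated by a basic sequence\<close>

lemma seq_pow_indicator:
  assumes "A \<subseteq> I" "A \<subseteq> {..<N}"
  shows "seq_pow G e (indicator A) = ordprod G (\<lambda>n. if n \<in> A then e n else \<one>) N"
proof -
  have "seq_pow G e (indicator A) = ordprod G (\<lambda>n. e n [^] (indicator A n :: nat)) N"
    using assms by (intro seq_pow_eq_ordprod) (auto simp: indicator_def)
  also have "\<dots> = ordprod G (\<lambda>n. if n \<in> A then e n else \<one>) N"
    using assms by (intro ordprod_cong) (auto simp: indicator_def)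
  finally show ?thesis .
qed

lemma seq_pow_indicator_singleton:
  assumes "j \<in> I"
  shows "seq_pow G e (indicator {j}) = e j"
proof -
  have "seq_pow G e (indicator {j}) = ordprod G (\<lambda>n. if n \<in> {j} then e n else \<one>) (Suc j)"
    using assms by (intro seq_pow_indicator) auto
  also have "\<dots> = e j"
    using assms by (simp add: ordprod_eq_one)
  finally show ?thesis .
qed

lemma seq_pow_indicator_upto_three:
  assumes "A \<subseteq> {0, 1, 2}" "A \<subseteq> I"
  shows "seq_pow G e (indicator A) = ordprod G (\<lambda>n. if n \<in> A then e n else \<one>) 3"
  using assms by (intro seq_pow_indicator) auto

lemma basic_seq_indicator:
  assumes "basic_seq G m e I" "finite A" "A \<subseteq> I" "A \<noteq> {}"
  shows "seq_pow G e (indicator A) \<noteq> \<one> \<and> seq_pow G e (indicator A) \<noteq> m"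
proof -
  have "indicator A \<noteq> (\<lambda>_. 0::nat)" using assms(4) by (auto simp: fun_eq_iff indicator_def)
  then show ?thesis using assms finitary01_indicator unfolding basic_seq_def by blast
qed

lemma generate_subset_signed_seq_pows:
  "generate G (e ` I) \<subseteq> {sign a \<otimes> seq_pow G e p | a p. finitary01 I p}"
proof
  have mem: "sign a \<otimes> seq_pow G e p \<in> {sign a \<otimes> seq_pow G e p | a p. finitary01 I p}"
    if "finitary01 I p" for a p
    using that by blast
  have single: "finitary01 I (indicator {j})" if "j \<in> I" for j
    using that by (intro finitary01_indicator) auto
  fix x assume "x \<in> generate G (e ` I)"
  then show "x \<in> {sign a \<otimes> seq_pow G e p | a p. finitary01 I p}"
  proof (induction rule: generate.induct)
    case one
    have eq: "\<one> = sign 0 \<otimes> seq_pow G e (indicator {})"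
      using seq_pow_indicator[of "{}" 0] by simp
    show ?case unfolding eq by (rule mem[OF finitary01_indicator]) auto
  next
    case (incl h)
    then obtain j where j: "j \<in> I" "h = e j" by blast
    then have eq: "h = sign 0 \<otimes> seq_pow G e (indicator {j})"
      using seq_pow_indicator_singleton[of j] by simp
    show ?case unfolding eq by (rule mem[OF single[OF j(1)]])
  next
    case (inv h)
    then obtain j where j: "j \<in> I" "h = e j" by blast
    obtain c where c: "e j \<otimes> e j = sign c" using square_eq_sign[of "e j"] j by auto
    have "inv h = sign c \<otimes> e j"
      unfolding j(2) by (rule inv_equality) (use j c in \<open>simp_all add: m_assoc sign_square\<close>)
    then have eq: "inv h = sign c \<otimes> seq_pow G e (indicator {j})"
      using seq_pow_indicator_singleton[OF j(1)] by simp
    show ?case unfolding eq by (rule mem[OF single[OF j(1)]])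
  next
    case (eng h1 h2)
    obtain a p b q where p: "finitary01 I p" "h1 = sign a \<otimes> seq_pow G e p"
      and q: "finitary01 I q" "h2 = sign b \<otimes> seq_pow G e q"
      using eng.IH by blast
    obtain K where K: "seq_pow G e p \<otimes> seq_pow G e q = sign K \<otimes> seq_pow G e (\<lambda>n. if p n = q n then 0 else 1)"
      using seq_pow_mult_normal_form[OF p(1) q(1)] by blast
    have "h1 \<otimes> h2 = sign (a + b) \<otimes> (seq_pow G e p \<otimes> seq_pow G e q)"
      using p q seq_pow_closed[OF p(1)] seq_pow_closed[OF q(1)]
        sign_left_commute[of "seq_pow G e p" "seq_pow G e q" b]
      by (simp add: m_assoc sign_add)
    also have "\<dots> = sign (a + b + K) \<otimes> seq_pow G e (\<lambda>n. if p n = q n then 0 else 1)"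
      using K seq_pow_closed[OF finitary01_xor[OF p(1) q(1)]] by (simp add: sign_add m_assoc)
    finally have eq: "h1 \<otimes> h2 = sign (a + b + K) \<otimes> seq_pow G e (\<lambda>n. if p n = q n then 0 else 1)" .
    show ?case unfolding eq by (rule mem[OF finitary01_xor[OF p(1) q(1)]])
  qed
qed

lemma signed_seq_pows_subset_generate:
  assumes "m \<in> generate G (e ` I)"
  shows "{sign a \<otimes> seq_pow G e p | a p. finitary01 I p} \<subseteq> generate G (e ` I)"
proof clarify
  fix a p assume p: "finitary01 I p"
  have sub: "subgroup (generate G (e ` I)) G" by (rule generate_is_subgroup[OF seq_closed])
  obtain N where N: "\<forall>n\<ge>N. p n = 0" using finitary01_bound[OF p] by blast
  have "ordprod G (\<lambda>n. e n [^] p n) N' \<in> generate G (e ` I)" for N'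
  proof (induction N')
    case (Suc N')
    have "e N' [^] p N' \<in> generate G (e ` I)"
      using finitary01_values[OF p, of N'] finitary01_support[OF p, of N'] subgroup.one_closed[OF sub]
      by (auto intro: generate.incl)
    then show ?case using Suc subgroup.m_closed[OF sub] by simp
  qed (simp add: subgroup.one_closed[OF sub])
  then have "seq_pow G e p \<in> generate G (e ` I)"
    using N finitary01_pow_closed[OF p] by (simp add: seq_pow_eq_ordprod)
  moreover have "sign a \<in> generate G (e ` I)"
    using assms subgroup.one_closed[OF sub] by (simp add: sign_def)
  ultimately show "sign a \<otimes> seq_pow G e p \<in> generate G (e ` I)"
    using subgroup.m_closed[OF sub] by blast
qed

lemma card_signed_seq_pows:
  assumes bas: "basic_seq G m e I" and I: "I = {..<n}"
  shows "card {sign a \<otimes> seq_pow G e p | a p. finitary01 I p} = 2 * 2 ^ n"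
proof -
  define f where "f = (\<lambda>(a, A). sign a \<otimes> seq_pow G e (indicator A))"
  have "{sign a \<otimes> seq_pow G e p | a p. finitary01 I p} = f ` ({0, 1} \<times> Pow {..<n})"
  proof (intro equalityI subsetI)
    fix x assume "x \<in> {sign a \<otimes> seq_pow G e p | a p. finitary01 I p}"
    then obtain a p where p: "finitary01 I p" "x = sign a \<otimes> seq_pow G e p" by blast
    then obtain A where A: "finite A" "A \<subseteq> {..<n}" "p = indicator A"
      using finitary01_set_eq[of I] I by blast
    have "sign a = sign (if even a then 0 else 1)" by (simp add: sign_def)
    then have "x = f (if even a then 0 else 1, A)" using p A by (simp add: f_def)
    then show "x \<in> f ` ({0, 1} \<times> Pow {..<n})" using A by auto
  next
    fix x assume "x \<in> f ` ({0, 1} \<times> Pow {..<n})"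
    then show "x \<in> {sign a \<otimes> seq_pow G e p | a p. finitary01 I p}"
      using I finite_subset by (auto simp: f_def intro!: finitary01_indicator)
  qed
  moreover have "inj_on f ({0, 1} \<times> Pow {..<n})"
  proof (rule inj_onI, clarify)
    fix a A b B assume ab: "a \<in> {0, 1}" "b \<in> {0, 1}" and AB: "A \<subseteq> {..<n}" "B \<subseteq> {..<n}"
      and "f (a, A) = f (b, B)"
    then have "indicator A = (indicator B :: nat \<Rightarrow> nat) \<and> sign a = sign b"
      using I finite_subset by (intro sign_seq_pow_inj[OF bas]) (auto simp: f_def intro!: finitary01_indicator)
    then show "a = b \<and> A = B"
      using ab inj_indicator_nat by (auto simp: sign_eq_iff dest: injD)
  qed
  ultimately show ?thesis
    by (simp add: card_image card_cartesian_product card_Pow)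
qed

lemma neg_one_in_generate:
  assumes "j \<in> I" "k \<in> I" "e j \<otimes> e k = m \<otimes> (e k \<otimes> e j)"
  shows "m \<in> generate G (e ` I)"
proof -
  have sub: "subgroup (generate G (e ` I)) G" by (rule generate_is_subgroup[OF seq_closed])
  have gen: "e j \<in> generate G (e ` I)" "e k \<in> generate G (e ` I)"
    using assms(1,2) by (auto intro: generate.incl)
  have "m = (e j \<otimes> e k) \<otimes> inv (e k \<otimes> e j)"
    using assms by (simp add: m_assoc)
  then show ?thesis
    using gen subgroup.m_closed[OF sub] subgroup.m_inv_closed[OF sub] by simp
qed

lemma card_generate:
  assumes "basic_seq G m e I" "I = {..<n}" "m \<in> generate G (e ` I)"
  shows "card (generate G (e ` I)) = 2 * 2 ^ n"
  using generate_subset_signed_seq_pows signed_seq_pows_subset_generate[OF assms(3)]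
    card_signed_seq_pows[OF assms(1,2)] by (simp add: subset_antisym)

theorem pairwise_anticomm_generate_order_8:
  assumes idx: "seq_index I" and bas: "basic_seq G m e I"
    and len: "\<forall>L. I = {..<L} \<longrightarrow> L \<ge> 2"
    and hyp: "\<forall>x\<in>generate G (e ` I) - {\<one>, m}. \<forall>y\<in>generate G (e ` I) - {\<one>, m}.
      x \<noteq> y \<and> x \<noteq> m \<otimes> y \<longrightarrow> x \<otimes> y = m \<otimes> (y \<otimes> x)"
  shows "I = {..<2} \<and> card (generate G (e ` I)) = 8"
proof -
  let ?gen = "generate G (e ` I)"
  have sub: "subgroup ?gen G" by (rule generate_is_subgroup[OF seq_closed])
  have anticomm: "x \<otimes> y = m \<otimes> (y \<otimes> x)"
    if "x \<in> ?gen" "y \<in> ?gen" "x \<notin> {\<one>, m}" "y \<notin> {\<one>, m}" "x \<otimes> y \<notin> {\<one>, m}" for x y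
    using hyp that prod_not_sign_imp_distinct[of x y] subgroup.subset[OF sub] by blast
  have not_sign: "seq_pow G e (indicator A) \<notin> {\<one>, m}" if "A \<subseteq> I" "A \<noteq> {}" "finite A" for A
    using basic_seq_indicator[OF bas that(3,1,2)] by blast
  have gen: "e j \<in> ?gen" if "j \<in> I" for j
    using that by (auto intro: generate.incl)
  have I01: "0 \<in> I" "1 \<in> I" using idx len unfolding seq_index_def by auto
  have a01: "e 0 \<otimes> e 1 = m \<otimes> (e 1 \<otimes> e 0)"
    using anticomm[OF gen gen] not_sign[of "{0}"] not_sign[of "{1}"] not_sign[of "{0, 1}"] I01
    by (simp add: seq_pow_indicator_upto_three numeral_3_eq_3)
  have "2 \<notin> I"
  proof
    assume I2: "2 \<in> I"
    have "e 0 \<otimes> e 2 = m \<otimes> (e 2 \<otimes> e 0)" "e 1 \<otimes> e 2 = m \<otimes> (e 2 \<otimes> e 1)"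
      using anticomm[OF gen gen] not_sign[of "{0}"] not_sign[of "{1}"] not_sign[of "{2}"]
        not_sign[of "{0, 2}"] not_sign[of "{1, 2}"] I01 I2
      by (simp_all add: seq_pow_indicator_upto_three numeral_3_eq_3 numeral_2_eq_2)
    then have "e 0 \<otimes> e 1 \<otimes> e 2 = e 2 \<otimes> (e 0 \<otimes> e 1)"
      using I01 I2 by (intro anticommuting_triple) auto
    moreover have "e 0 \<otimes> e 1 \<otimes> e 2 = m \<otimes> (e 2 \<otimes> (e 0 \<otimes> e 1))"
      using anticomm[of "e 0 \<otimes> e 1" "e 2"] gen I01 I2 subgroup.m_closed[OF sub]
        not_sign[of "{0, 1}"] not_sign[of "{2}"] not_sign[of "{0, 1, 2}"]
      by (simp add: seq_pow_indicator_upto_three numeral_3_eq_3 numeral_2_eq_2)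
    ultimately show False
      using I01 I2 neg_one_neq_one r_cancel_one'[of "e 2 \<otimes> (e 0 \<otimes> e 1)" m] by simp
  qed
  then have I: "I = {..<2}"
    using idx len unfolding seq_index_def by (metis le_antisym lessThan_iff not_le UNIV_I)
  have "m \<in> ?gen" by (rule neg_one_in_generate[OF I01 a01])
  then show ?thesis using card_generate[OF bas I] I by simp
qed

end

theorem lemma3p1:
  fixes G :: "('a, 'b) monoid_scheme" and m :: 'a and e :: "nat \<Rightarrow> 'a" and I :: "nat set"
  assumes sg: "signed_group G m"
    and idx: "seq_index I"
    and ein: "e ` I \<subseteq> carrier G"
    and bas: "basic_seq G m e I"
  shows
   "(\<forall>p q. finitary01 I p \<and> finitary01 I q \<longrightarrow>
      (\<forall>N. (\<forall>n\<ge>N. p n = 0 \<and> q n = 0) \<longrightarrow>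
        \<comment> \<open>main identity\<close>
        seq_pow G e p \<otimes>\<^bsub>G\<^esub> seq_pow G e q
          = m [^]\<^bsub>G\<^esub> (\<Sum>j<N. \<Sum>k\<in>{j<..<N}.
               ((1 - comm_fun G (e j) (e k)) div 2) * int (p k) * int (q j))
            \<otimes>\<^bsub>G\<^esub> seq_pow G e (\<lambda>n. p n + q n)
        \<comment> \<open>(1)\<close>
      \<and> comm_fun G (seq_pow G e p) (seq_pow G e q)
          = neg1pow (((\<Sum>j<N. \<Sum>k<N. comm_fun G (e j) (e k) * int (p k) * int (q j))
                      - (\<Sum>n<N. int (p n)) * (\<Sum>n<N. int (q n))) div 2)
        \<comment> \<open>(2)\<close>
      \<and> (anticomm_seq G m e I \<longrightarrow>
           comm_fun G (seq_pow G e p) (seq_pow G e q)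
             = neg1pow ((\<Sum>n<N. int (p n)) * (\<Sum>n<N. int (q n)) - (\<Sum>n<N. int (p n * q n))))))
   \<and> \<comment> \<open>(4)\<close>
   (\<forall>p. finitary01 I p \<and> anticomm_seq G m e I \<longrightarrow>
      (let P = (\<Sum>n\<in>{n. p n \<noteq> 0}. p n) in
        seq_pow G e p \<otimes>\<^bsub>G\<^esub> seq_pow G e p
          = seq_pow G e (\<lambda>n. 2 * p n) \<otimes>\<^bsub>G\<^esub> m [^]\<^bsub>G\<^esub> (P * (P - 1) div 2)
        \<and> (positive_seq G e I \<longrightarrow>
             (seq_pow G e p \<otimes>\<^bsub>G\<^esub> seq_pow G e p = m \<longleftrightarrow> P mod 4 = 2 \<or> P mod 4 = 3))
        \<and> (negative_seq G m e I \<longrightarrow>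
             (seq_pow G e p \<otimes>\<^bsub>G\<^esub> seq_pow G e p = m \<longleftrightarrow> P mod 4 = 2 \<or> P mod 4 = 1))))
   \<and> \<comment> \<open>(5)\<close>
   (\<forall>n. I = {..<n} \<and> anticomm_seq G m e I \<longrightarrow>
      (let S = {x. (\<exists>p. finitary01 I p \<and> x = seq_pow G e p) \<and> x \<otimes>\<^bsub>G\<^esub> x = m} in
        (positive_seq G e I \<longrightarrow> card S = bsum n 2 + bsum n 3)
        \<and> (negative_seq G m e I \<longrightarrow> card S = bsum n 1 + bsum n 2)))
   \<and> \<comment> \<open>(3)\<close>
   (\<forall>(f :: nat \<Rightarrow> 'a) J. seq_index J \<and> f ` J \<subseteq> carrier G \<and> basic_seq G m f J
       \<and> (\<forall>L. J = {..<L} \<longrightarrow> L \<ge> 2)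
       \<and> (\<forall>x\<in>generate G (f ` J) - {\<one>\<^bsub>G\<^esub>, m}. \<forall>y\<in>generate G (f ` J) - {\<one>\<^bsub>G\<^esub>, m}.
             x \<noteq> y \<and> x \<noteq> m \<otimes>\<^bsub>G\<^esub> y \<longrightarrow> x \<otimes>\<^bsub>G\<^esub> y = m \<otimes>\<^bsub>G\<^esub> (y \<otimes>\<^bsub>G\<^esub> x))
     \<longrightarrow> J = {..<2} \<and> card (generate G (f ` J)) = 8)"
proof -
  have sgrp: "signed_grp G m" by (rule signed_grpI[OF sg])
  interpret signed_seq G m e I by (rule signed_seqI[OF sgrp ein])
  show ?thesis
    unfolding Let_def
    apply (intro conjI allI impI)
    subgoal for p q N using seq_pow_mult[of p q N] by (simp add: int_pow_neg_one)
    subgoal for p q N using comm_fun_seq_pow_ac_matrix[of p q N] by simp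
    subgoal for p q N using comm_fun_seq_pow_anticomm[of p q N] by simp
    subgoal for p using seq_pow_square[of p] sum_finitary01_support[of I p] by (simp add: nat_pow_neg_one)
    subgoal for p using seq_pow_square_positive[of p] sum_finitary01_support[of I p] by simp
    subgoal for p using seq_pow_square_negative[of p] sum_finitary01_support[of I p] by simp
    subgoal for n using card_negative_seq_pows_of_positive[OF bas] by blast
    subgoal for n using card_negative_seq_pows_of_negative[OF bas] by blast
    subgoal for f J using signed_seq.pairwise_anticomm_generate_order_8[OF signed_seqI[OF sgrp]] by blast
    subgoal for f J using signed_seq.pairwise_anticomm_generate_order_8[OF signed_seqI[OF sgrp]] by blast
    done
qed

end
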